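(* Let $E=(E_{m,n})_{m,n\in\mathbb N}$ be a nonnegative process adapted to a filtration sequence $\mathcal F$. The following are equivalent: (i) for every bounded integer sequence $r$, $E$ is an $r$-asymptotic e-process for $\mathcal P$ and $\mathcal F$; (ii) there exists an integer sequence $r=(r_m)_{m\in\mathbb N}$ with $r_m\to\infty$ as $m\to\infty$ such that $E$ is an $r$-asymptotic e-process for $\mathcal P$ and $\mathcal F$.
   Context: $(\Omega,\mathcal A)$ is a measurable space and $\mathcal P$ a set of probability measures on it. $\mathbb N=\{0,1,2,\dots\}$; an extended integer is an element of $\mathbb N\cup\{\infty\}$. Nonnegative random variables take values in $[0,\infty]$, and for such $X$, $\mathbb E_P[X]:=\infty$ if $X$ is not $P$-integrable. For a process $(X_n)$, $X_\infty:=\limsup_n X_n$. A filtration sequence is a family $\mathcal F=(\mathcal F_{m,n})_{m,n\in\mathbb N}$ of sub-$\sigma$-algebras of $\mathcal A$ such that for each $m$, $\mathcal F_{m,\bullet}$ is a filtration; $E$ is adapted if $E_{m,n}$ is $\mathcal F_{m,n}$-measurable. For a filtration $\mathcal G$ and $\rho\in\mathbb N\cup\{\infty\}$, $\mathcal T(\rho,\mathcal G,\mathcal P)$ is the set of $\mathcal G$-stopping times $\tau$ (values in $\mathbb N\cup\{\infty\}$) with $P[\tau\le\rho]=1$ for all $P\in\mathcal P$. For an extended integer sequence $r$, $\mathcal T(r,\mathcal F,\mathcal P)$ is the set of sequences $(\tau_m)$ with $\tau_m\in\mathcal T(r_m,\mathcal F_{m,\bullet},\mathcal P)$. A nonnegative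 adapted process $E$ is an $r$-asymptotic e-process (for $\mathcal P$ and $\mathcal F$) if for every $\tau\in\mathcal T(r,\mathcal F,\mathcal P)$, $\limsup_{m\to\infty}\sup_{P\in\mathcal P}\mathbb E_P[E_{m,\tau_m}]\le 1$. *)

theory Defs
  imports "HOL-Probability.Probability"
begin

definition filtration_seq :: "'a measure \<Rightarrow> (nat \<Rightarrow> nat \<Rightarrow> 'a measure) \<Rightarrow> bool" where
  "filtration_seq M F \<longleftrightarrow>
     (\<forall>m n. subalgebra M (F m n)) \<and>
     (\<forall>m n n'. n \<le> n' \<longrightarrow> sets (F m n) \<subseteq> sets (F m n'))"

definition adapted_seq :: "(nat \<Rightarrow> nat \<Rightarrow> 'a measure) \<Rightarrow> (nat \<Rightarrow> nat \<Rightarrow> 'a \<Rightarrow> ennreal) \<Rightarrow> bool" where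
  "adapted_seq F E \<longleftrightarrow> (\<forall>m n. E m n \<in> borel_measurable (F m n))"

definition stopping_time_enat :: "(nat \<Rightarrow> 'a measure) \<Rightarrow> ('a \<Rightarrow> enat) \<Rightarrow> bool" where
  "stopping_time_enat G \<tau> \<longleftrightarrow> (\<forall>n. {\<omega> \<in> space (G n). \<tau> \<omega> \<le> enat n} \<in> sets (G n))"

definition stopping_times_bounded ::
  "enat \<Rightarrow> (nat \<Rightarrow> 'a measure) \<Rightarrow> 'a measure set \<Rightarrow> ('a \<Rightarrow> enat) set" where
  "stopping_times_bounded \<rho> G \<P> =
     {\<tau>. stopping_time_enat G \<tau> \<and> (\<forall>P\<in>\<P>. emeasure P {\<omega> \<in> space P. \<tau> \<omega> \<le> \<rho>} = 1)}"

definition stopped_value :: "(nat \<Rightarrow> 'a \<Rightarrow> ennreal) \<Rightarrow> ('a \<Rightarrow> enat) \<Rightarrow> 'a \<Rightarrow> ennreal" where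
  "stopped_value X \<tau> \<omega> =
     (case \<tau> \<omega> of enat n \<Rightarrow> X n \<omega> | \<infinity> \<Rightarrow> limsup (\<lambda>n. X n \<omega>))"

text \<open>r-asymptotic e-process; expectations of [0,\<infinity>]-valued variables are
  nonnegative integrals (value \<infinity> when not integrable).\<close>
definition asymptotic_e_process ::
  "'a measure set \<Rightarrow> (nat \<Rightarrow> nat \<Rightarrow> 'a measure) \<Rightarrow> (nat \<Rightarrow> enat) \<Rightarrow> (nat \<Rightarrow> nat \<Rightarrow> 'a \<Rightarrow> ennreal) \<Rightarrow> bool" where
  "asymptotic_e_process \<P> F r E \<longleftrightarrow>
     (\<forall>\<tau>::nat \<Rightarrow> 'a \<Rightarrow> enat. (\<forall>m. \<tau> m \<in> stopping_times_bounded (r m) (F m) \<P>) \<longrightarrow>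
        limsup (\<lambda>m. SUP P\<in>\<P>. \<integral>\<^sup>+ \<omega>. stopped_value (E m) (\<tau> m) \<omega> \<partial>P) \<le> 1)"

end

theory Submission
  imports Defs
begin

text \<open>
  Write \<open>W k m\<close> for the worst-case expected value of \<open>E m\<close> stopped at a time bounded by \<open>k\<close>.
  Choosing near-maximising stopping times shows that \<open>E\<close> is an \<open>r\<close>-asymptotic e-process
  iff \<open>limsup\<^sub>m W (r m) m \<le> 1\<close>, and \<open>W\<close> is monotone in \<open>k\<close>. Hence (ii) implies (i) because a
  bound \<open>r\<^sub>m \<rightarrow> \<infinity>\<close> eventually exceeds any bounded one, and (i) implies (ii) by a diagonal
  argument: if \<open>W k m \<le> 1 + 1/(k+1)\<close> for \<open>m \<ge> N k\<close>, let \<open>r m\<close> be the largest \<open>k \<le> m\<close> with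
  \<open>N k \<le> m\<close>.
\<close>

lemma limsup_SUP_le_of_selections:
  fixes f :: "nat \<Rightarrow> 'b \<Rightarrow> 'c::{complete_linorder, dense_linorder}"
  assumes nonempty: "\<And>m. S m \<noteq> {}"
    and selections: "\<And>\<sigma>. (\<And>m. \<sigma> m \<in> S m) \<Longrightarrow> limsup (\<lambda>m. f m (\<sigma> m)) \<le> c"
  shows "limsup (\<lambda>m. SUP x\<in>S m. f m x) \<le> c"
  unfolding Limsup_le_iff
proof (intro allI impI)
  fix y assume "c < y"
  then obtain z where "c < z" "z < y" using dense by blast
  have "\<exists>x. x \<in> S m \<and> (z < (SUP x\<in>S m. f m x) \<longrightarrow> z < f m x)" for m
    using nonempty[of m] by (cases "z < (SUP x\<in>S m. f m x)") (auto simp: less_SUP_iff)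
  then have "\<exists>\<sigma>. \<forall>m. \<sigma> m \<in> S m \<and> (z < (SUP x\<in>S m. f m x) \<longrightarrow> z < f m (\<sigma> m))"
    by (rule choice[OF allI])
  then obtain \<sigma> where \<sigma>: "\<And>m. \<sigma> m \<in> S m"
    and near_max: "\<And>m. z < (SUP x\<in>S m. f m x) \<Longrightarrow> z < f m (\<sigma> m)"
    by blast
  have "limsup (\<lambda>m. f m (\<sigma> m)) < z"
    using selections[OF \<sigma>] \<open>c < z\<close> by (rule le_less_trans)
  then have "eventually (\<lambda>m. f m (\<sigma> m) < z) sequentially"
    by (rule Limsup_lessD)
  then show "eventually (\<lambda>m. (SUP x\<in>S m. f m x) < y) sequentially"
  proof eventually_elim
    case (elim m)
    then have "(SUP x\<in>S m. f m x) \<le> z"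
      using near_max[of m] by (meson less_asym not_less)
    then show ?case using \<open>z < y\<close> by (rule le_less_trans)
  qed
qed

lemma eventually_sequentially_diagonal:
  assumes "\<And>k. eventually (P k) sequentially"
  obtains r :: "nat \<Rightarrow> nat"
  where "filterlim r at_top sequentially" "eventually (\<lambda>m. P (r m) m) sequentially"
proof -
  obtain N where N: "\<And>k m. N k \<le> m \<Longrightarrow> P k m"
    using assms unfolding eventually_sequentially by metis
  define K where "K m = insert 0 {k. k \<le> m \<and> N k \<le> m}" for m
  define r where "r m = Max (K m)" for m
  have finite_K: "finite (K m)" for m
    unfolding K_def by auto
  have "k \<le> r m" if "k \<le> m" "N k \<le> m" for k m
    unfolding r_def using finite_K that by (intro Max_ge) (auto simp: K_def)
  then have "filterlim r at_top sequentially"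
    unfolding filterlim_at_top eventually_sequentially by (metis max.bounded_iff)
  moreover have "P (r m) m" if "N 0 \<le> m" for m
  proof -
    have "r m \<in> K m"
      unfolding r_def using finite_K by (intro Max_in) (auto simp: K_def)
    then show ?thesis using that N by (auto simp: K_def)
  qed
  then have "eventually (\<lambda>m. P (r m) m) sequentially"
    unfolding eventually_sequentially by blast
  ultimately show ?thesis by (rule that)
qed

lemma limsup_diagonal_le:
  fixes a :: "nat \<Rightarrow> nat \<Rightarrow> ennreal"
  assumes "\<And>k. limsup (a k) \<le> c"
  obtains r :: "nat \<Rightarrow> nat"
  where "filterlim r at_top sequentially" "limsup (\<lambda>m. a (r m) m) \<le> c"
proof (cases "c = \<top>")
  case True
  then show ?thesis by (intro that[of "\<lambda>m. m"]) (simp_all add: filterlim_ident)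
next
  case False
  have "eventually (\<lambda>m. a k m < c + ennreal (1 / Suc k)) sequentially" for k
    using False by (intro Limsup_lessD order_le_less_trans[OF assms[of k]]) simp
  then obtain r :: "nat \<Rightarrow> nat" where r: "filterlim r at_top sequentially"
    and below: "eventually (\<lambda>m. a (r m) m < c + ennreal (1 / Suc (r m))) sequentially"
    by (rule eventually_sequentially_diagonal)
  have "limsup (\<lambda>m. a (r m) m) \<le> c"
  proof (rule ennreal_le_epsilon)
    fix e :: real assume "0 < e"
    then obtain K :: nat where K: "1 / Suc K < e"
      by (metis nat_approx_posE)
    have "eventually (\<lambda>m. K \<le> r m) sequentially"
      using r by (simp add: filterlim_at_top)
    with below have "eventually (\<lambda>m. a (r m) m \<le> c + ennreal e) sequentially"
    proof eventually_elim
      case (elim m)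
      have "1 / Suc (r m) \<le> 1 / real (Suc K)"
        using elim(2) by (intro divide_left_mono) auto
      with K have "ennreal (1 / Suc (r m)) \<le> ennreal e"
        by (intro ennreal_leI) linarith
      with elim(1) show ?case by (meson add_left_mono less_imp_le order_trans)
    qed
    then show "limsup (\<lambda>m. a (r m) m) \<le> c + ennreal e"
      by (rule Limsup_bounded)
  qed
  with r show ?thesis by (rule that)
qed

lemma limsup_bounded_index_iff_diverging_index:
  fixes W :: "nat \<Rightarrow> nat \<Rightarrow> ennreal"
  assumes mono: "\<And>k k' m. k \<le> k' \<Longrightarrow> W k m \<le> W k' m"
  shows "(\<forall>r::nat \<Rightarrow> nat. (\<exists>B. \<forall>m. r m \<le> B) \<longrightarrow> limsup (\<lambda>m. W (r m) m) \<le> c)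
    \<longleftrightarrow> (\<exists>r::nat \<Rightarrow> nat. filterlim r at_top sequentially \<and> limsup (\<lambda>m. W (r m) m) \<le> c)"
proof
  assume bounded: "\<forall>r::nat \<Rightarrow> nat. (\<exists>B. \<forall>m. r m \<le> B) \<longrightarrow> limsup (\<lambda>m. W (r m) m) \<le> c"
  have "limsup (W k) \<le> c" for k
    using bounded[rule_format, of "\<lambda>_. k"] by blast
  then obtain r :: "nat \<Rightarrow> nat"
    where "filterlim r at_top sequentially" "limsup (\<lambda>m. W (r m) m) \<le> c"
    by (rule limsup_diagonal_le)
  then show "\<exists>r::nat \<Rightarrow> nat. filterlim r at_top sequentially \<and> limsup (\<lambda>m. W (r m) m) \<le> c"
    by blast
next
  assume "\<exists>r::nat \<Rightarrow> nat. filterlim r at_top sequentially \<and> limsup (\<lambda>m. W (r m) m) \<le> c"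
  then obtain r :: "nat \<Rightarrow> nat"
    where r: "filterlim r at_top sequentially" and le: "limsup (\<lambda>m. W (r m) m) \<le> c"
    by blast
  show "\<forall>s::nat \<Rightarrow> nat. (\<exists>B. \<forall>m. s m \<le> B) \<longrightarrow> limsup (\<lambda>m. W (s m) m) \<le> c"
  proof (intro allI impI)
    fix s :: "nat \<Rightarrow> nat" assume "\<exists>B. \<forall>m. s m \<le> B"
    then obtain B where B: "\<And>m. s m \<le> B" by blast
    have "eventually (\<lambda>m. B \<le> r m) sequentially"
      using r by (simp add: filterlim_at_top)
    moreover have "W (s m) m \<le> W (r m) m" if "B \<le> r m" for m
      using mono[OF order_trans[OF B that]] .
    ultimately have "eventually (\<lambda>m. W (s m) m \<le> W (r m) m) sequentially"
      by (rule eventually_mono)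
    then have "limsup (\<lambda>m. W (s m) m) \<le> limsup (\<lambda>m. W (r m) m)"
      by (rule Limsup_mono)
    with le show "limsup (\<lambda>m. W (s m) m) \<le> c" by (rule order_trans[rotated])
  qed
qed

lemma zero_in_stopping_times_bounded:
  assumes "\<forall>P\<in>\<P>. prob_space P"
  shows "(\<lambda>_. 0) \<in> stopping_times_bounded \<rho> G \<P>"
  using assms unfolding stopping_times_bounded_def stopping_time_enat_def
  by (auto simp: prob_space.emeasure_space_1)

lemma stopping_times_bounded_mono:
  assumes \<P>: "\<forall>P\<in>\<P>. prob_space P \<and> sets P = sets M"
    and G: "\<And>n. subalgebra M (G n)"
    and "k \<le> k'"
  shows "stopping_times_bounded (enat k) G \<P> \<subseteq> stopping_times_bounded (enat k') G \<P>"
proof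
  fix \<tau> assume \<tau>: "\<tau> \<in> stopping_times_bounded (enat k) G \<P>"
  have "emeasure P {\<omega> \<in> space P. \<tau> \<omega> \<le> enat k'} = 1" if "P \<in> \<P>" for P
  proof -
    interpret prob_space P using \<P> that by blast
    have sets_P: "sets P = sets M" and space_P: "space P = space M"
      using \<P> that sets_eq_imp_space_eq by blast+
    have "{\<omega> \<in> space (G k'). \<tau> \<omega> \<le> enat k'} \<in> sets (G k')"
      using \<tau> unfolding stopping_times_bounded_def stopping_time_enat_def by blast
    then have "{\<omega> \<in> space P. \<tau> \<omega> \<le> enat k'} \<in> events"
      using G[of k'] sets_P space_P unfolding subalgebra_def by auto
    then have "emeasure P {\<omega> \<in> space P. \<tau> \<omega> \<le> enat k}
        \<le> emeasure P {\<omega> \<in> space P. \<tau> \<omega> \<le> enat k'}"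
      using \<open>k \<le> k'\<close> by (intro emeasure_mono) (auto elim: order_trans)
    moreover have "emeasure P {\<omega> \<in> space P. \<tau> \<omega> \<le> enat k} = 1"
      using \<tau> that unfolding stopping_times_bounded_def by blast
    ultimately show ?thesis
      using emeasure_le_1[of "{\<omega> \<in> space P. \<tau> \<omega> \<le> enat k'}"] by simp
  qed
  with \<tau> show "\<tau> \<in> stopping_times_bounded (enat k') G \<P>"
    unfolding stopping_times_bounded_def by blast
qed

definition worst_stopped_value ::
  "'a measure set \<Rightarrow> (nat \<Rightarrow> nat \<Rightarrow> 'a measure) \<Rightarrow> (nat \<Rightarrow> nat \<Rightarrow> 'a \<Rightarrow> ennreal) \<Rightarrow> nat \<Rightarrow> nat \<Rightarrow> ennreal"
  where "worst_stopped_value \<P> F E k m =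
    (SUP \<tau>\<in>stopping_times_bounded (enat k) (F m) \<P>. SUP P\<in>\<P>. \<integral>\<^sup>+ \<omega>. stopped_value (E m) \<tau> \<omega> \<partial>P)"

lemma worst_stopped_value_mono:
  assumes "\<forall>P\<in>\<P>. prob_space P \<and> sets P = sets M" "filtration_seq M F" "k \<le> k'"
  shows "worst_stopped_value \<P> F E k m \<le> worst_stopped_value \<P> F E k' m"
  unfolding worst_stopped_value_def
  using assms stopping_times_bounded_mono[of \<P> M "F m" k k']
  by (intro SUP_subset_mono) (auto simp: filtration_seq_def)

lemma asymptotic_e_process_iff_limsup_worst_stopped_value:
  assumes "\<forall>P\<in>\<P>. prob_space P"
  shows "asymptotic_e_process \<P> F (\<lambda>m. enat (r m)) E
    \<longleftrightarrow> limsup (\<lambda>m. worst_stopped_value \<P> F E (r m) m) \<le> 1"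
proof -
  define V where "V m \<tau> = (SUP P\<in>\<P>. \<integral>\<^sup>+ \<omega>. stopped_value (E m) \<tau> \<omega> \<partial>P)" for m \<tau>
  define T where "T m = stopping_times_bounded (enat (r m)) (F m) \<P>" for m
  have "asymptotic_e_process \<P> F (\<lambda>m. enat (r m)) E
    \<longleftrightarrow> (\<forall>\<tau>. (\<forall>m. \<tau> m \<in> T m) \<longrightarrow> limsup (\<lambda>m. V m (\<tau> m)) \<le> 1)"
    unfolding asymptotic_e_process_def V_def T_def by (rule refl)
  also have "\<dots> \<longleftrightarrow> limsup (\<lambda>m. SUP \<tau>\<in>T m. V m \<tau>) \<le> 1"
  proof
    assume "\<forall>\<tau>. (\<forall>m. \<tau> m \<in> T m) \<longrightarrow> limsup (\<lambda>m. V m (\<tau> m)) \<le> 1"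
    moreover have "T m \<noteq> {}" for m
      using zero_in_stopping_times_bounded[OF assms] unfolding T_def by blast
    ultimately show "limsup (\<lambda>m. SUP \<tau>\<in>T m. V m \<tau>) \<le> 1"
      by (intro limsup_SUP_le_of_selections[where S = T]) blast+
  next
    assume worst: "limsup (\<lambda>m. SUP \<tau>\<in>T m. V m \<tau>) \<le> 1"
    show "\<forall>\<tau>. (\<forall>m. \<tau> m \<in> T m) \<longrightarrow> limsup (\<lambda>m. V m (\<tau> m)) \<le> 1"
    proof (intro allI impI)
      fix \<tau> :: "nat \<Rightarrow> 'a \<Rightarrow> enat" assume "\<forall>m. \<tau> m \<in> T m"
      then have "limsup (\<lambda>m. V m (\<tau> m)) \<le> limsup (\<lambda>m. SUP \<tau>\<in>T m. V m \<tau>)"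
        by (intro Limsup_mono always_eventually allI SUP_upper) blast
      with worst show "limsup (\<lambda>m. V m (\<tau> m)) \<le> 1" by (rule order_trans[rotated])
    qed
  qed
  also have "\<dots> \<longleftrightarrow> limsup (\<lambda>m. worst_stopped_value \<P> F E (r m) m) \<le> 1"
    unfolding worst_stopped_value_def V_def T_def by (rule refl)
  finally show ?thesis .
qed

theorem mainTheorem2:
  fixes M :: "'a measure" and \<P> :: "'a measure set"
    and F :: "nat \<Rightarrow> nat \<Rightarrow> 'a measure" and E :: "nat \<Rightarrow> nat \<Rightarrow> 'a \<Rightarrow> ennreal"
  assumes "\<forall>P\<in>\<P>. prob_space P \<and> sets P = sets M"
    and "filtration_seq M F"
    and "adapted_seq F E"
  shows "(\<forall>r::nat \<Rightarrow> nat. (\<exists>B. \<forall>m. r m \<le> B) \<longrightarrow> asymptotic_e_process \<P> F (\<lambda>m. enat (r m)) E)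
         \<longleftrightarrow> (\<exists>r::nat \<Rightarrow> nat. filterlim r at_top sequentially \<and> asymptotic_e_process \<P> F (\<lambda>m. enat (r m)) E)"
proof -
  have "\<forall>P\<in>\<P>. prob_space P" using assms(1) by blast
  note characterisation = asymptotic_e_process_iff_limsup_worst_stopped_value[OF this]
  show ?thesis
    unfolding characterisation
    by (rule limsup_bounded_index_iff_diverging_index[where W = "worst_stopped_value \<P> F E"])
      (rule worst_stopped_value_mono[OF assms(1,2)])
qed

end
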